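(* Let $k$ be a positive integer and let $D$ be a digraph with no isolated vertex. Then $\gamma_{trk}(D)\le (k+1)\gamma(D)$. Moreover, if $\gamma_{trk}(D)=(k+1)\gamma(D)$, then every $\gamma(D)$-set is a packing in $D$.
   Context: All digraphs are finite, with no loops or multiple arcs (pairs of opposite arcs are allowed). For a vertex $v$, $N^-(v)$ and $N^+(v)$ denote its sets of in-neighbors and out-neighbors, and $N^+[v]=N^+(v)\cup\{v\}$; for $X\subseteq V(D)$, $N^+[X]=\bigcup_{v\in X}N^+[v]$. A vertex is isolated if it has no in-neighbor and no out-neighbor. For a positive integer $k$, a $k$-rainbow dominating function ($k$RDF) on $D$ is a function $f:V(D)\to\mathcal P(\{1,\dots,k\})$ such that every vertex $v$ with $f(v)=\emptyset$ satisfies $\bigcup_{u\in N^-(v)}f(u)=\{1,\dots,k\}$. Its weight is $\omega(f)=\sum_{v\in V(D)}|f(v)|$. If $D$ has no isolated vertex, a total $k$-rainbow dominating function (T$k$RDF) on $D$ is a $k$RDF $f$ such that the subdigraph of $D$ induced by $\{v: f(v)\neq\emptyset\}$ has no isolated vertex; $\gamma_{trk}(D)$ is the minimum weight of a T$k$RDF on $D$. A set $S\subseteq V(D)$ is a dominating set if $N^+[S]=V(D)$; $\gamma(D)$ is the minimum size of a dominating set, and a dominating set of size $\gamma(D)$ is a $\gamma(D)$-set. A set $S$ is a packing if $N^+[u]\cap N^+[v]=\emptyset$ for all distinct $u,v\in S$. *)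

theory Defs
  imports Main
begin

definition digraph :: "'a set \<Rightarrow> ('a \<times> 'a) set \<Rightarrow> bool" where
  "digraph V A \<longleftrightarrow> finite V \<and> A \<subseteq> V \<times> V \<and> (\<forall>v. (v, v) \<notin> A)"

definition in_nbrs :: "('a \<times> 'a) set \<Rightarrow> 'a \<Rightarrow> 'a set" where
  "in_nbrs A v = {u. (u, v) \<in> A}"

definition out_nbrs :: "('a \<times> 'a) set \<Rightarrow> 'a \<Rightarrow> 'a set" where
  "out_nbrs A v = {w. (v, w) \<in> A}"

definition closed_out_nbhd :: "('a \<times> 'a) set \<Rightarrow> 'a \<Rightarrow> 'a set" where
  "closed_out_nbhd A v = insert v (out_nbrs A v)"

definition closed_out_nbhd_set :: "('a \<times> 'a) set \<Rightarrow> 'a set \<Rightarrow> 'a set" where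
  "closed_out_nbhd_set A X = (\<Union>v\<in>X. closed_out_nbhd A v)"

definition isolated_in :: "'a set \<Rightarrow> ('a \<times> 'a) set \<Rightarrow> 'a \<Rightarrow> bool" where
  "isolated_in V A v \<longleftrightarrow> v \<in> V \<and> in_nbrs A v = {} \<and> out_nbrs A v = {}"

definition no_isolated :: "'a set \<Rightarrow> ('a \<times> 'a) set \<Rightarrow> bool" where
  "no_isolated V A \<longleftrightarrow> (\<forall>v\<in>V. \<not> isolated_in V A v)"

definition induced_arcs :: "('a \<times> 'a) set \<Rightarrow> 'a set \<Rightarrow> ('a \<times> 'a) set" where
  "induced_arcs A S = A \<inter> (S \<times> S)"

definition is_kRDF :: "'a set \<Rightarrow> ('a \<times> 'a) set \<Rightarrow> nat \<Rightarrow> ('a \<Rightarrow> nat set) \<Rightarrow> bool" where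
  "is_kRDF V A k f \<longleftrightarrow>
     (\<forall>v\<in>V. f v \<subseteq> {1..k}) \<and> (\<forall>v. v \<notin> V \<longrightarrow> f v = {}) \<and>
     (\<forall>v\<in>V. f v = {} \<longrightarrow> (\<Union>u\<in>in_nbrs A v. f u) = {1..k})"

definition weight :: "'a set \<Rightarrow> ('a \<Rightarrow> nat set) \<Rightarrow> nat" where
  "weight V f = (\<Sum>v\<in>V. card (f v))"

definition is_TkRDF :: "'a set \<Rightarrow> ('a \<times> 'a) set \<Rightarrow> nat \<Rightarrow> ('a \<Rightarrow> nat set) \<Rightarrow> bool" where
  "is_TkRDF V A k f \<longleftrightarrow> is_kRDF V A k f \<and>
     no_isolated {v\<in>V. f v \<noteq> {}} (induced_arcs A {v\<in>V. f v \<noteq> {}})"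

definition gamma_trk :: "'a set \<Rightarrow> ('a \<times> 'a) set \<Rightarrow> nat \<Rightarrow> nat" where
  "gamma_trk V A k = (LEAST w. \<exists>f. is_TkRDF V A k f \<and> weight V f = w)"

definition dominating_set :: "'a set \<Rightarrow> ('a \<times> 'a) set \<Rightarrow> 'a set \<Rightarrow> bool" where
  "dominating_set V A S \<longleftrightarrow> S \<subseteq> V \<and> closed_out_nbhd_set A S = V"

definition domination_number :: "'a set \<Rightarrow> ('a \<times> 'a) set \<Rightarrow> nat" where
  "domination_number V A = (LEAST n. \<exists>S. dominating_set V A S \<and> card S = n)"

definition gamma_set :: "'a set \<Rightarrow> ('a \<times> 'a) set \<Rightarrow> 'a set \<Rightarrow> bool" where
  "gamma_set V A S \<longleftrightarrow> dominating_set V A S \<and> card S = domination_number V A"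

definition packing :: "('a \<times> 'a) set \<Rightarrow> 'a set \<Rightarrow> bool" where
  "packing A S \<longleftrightarrow> (\<forall>u\<in>S. \<forall>v\<in>S. u \<noteq> v \<longrightarrow> closed_out_nbhd A u \<inter> closed_out_nbhd A v = {})"

end

theory Submission
  imports Defs
begin

text \<open>Give every vertex s of a dominating set S the full colour set {1..k} and one chosen
  neighbour g s outside S the colour 1. Vertices outside S receive all k colours from their
  dominator, and every coloured vertex has a coloured neighbour, so this is a total k-rainbow
  dominating function of weight at most k|S| + |S|. If a \<gamma>-set S is not a packing, two of its
  vertices are adjacent or share an out-neighbour; the companions can then be chosen so that at
  most |S| - 1 of them lie outside S, and the bound becomes strict.\<close>

definition adjacent :: "('a \<times> 'a) set \<Rightarrow> 'a \<Rightarrow> 'a \<Rightarrow> bool" where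
  "adjacent A u v \<longleftrightarrow> (u, v) \<in> A \<or> (v, u) \<in> A"

definition companion_map :: "'a set \<Rightarrow> ('a \<times> 'a) set \<Rightarrow> 'a set \<Rightarrow> ('a \<Rightarrow> 'a) \<Rightarrow> bool" where
  "companion_map V A S g \<longleftrightarrow> (\<forall>s\<in>S. g s \<in> V \<and> adjacent A s (g s))"

definition companion_RDF :: "nat \<Rightarrow> 'a set \<Rightarrow> ('a \<Rightarrow> 'a) \<Rightarrow> 'a \<Rightarrow> nat set" where
  "companion_RDF k S g v = (if v \<in> S then {1..k} else if v \<in> g ` S then {1} else {})"

lemma gamma_trk_le_weight:
  assumes "is_TkRDF V A k f"
  shows "gamma_trk V A k \<le> weight V f"
  unfolding gamma_trk_def using assms by (metis (mono_tags, lifting) Least_le)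

lemma companion_RDF_is_kRDF:
  assumes "k \<ge> 1" and dom: "dominating_set V A S" and g: "companion_map V A S g"
  shows "is_kRDF V A k (companion_RDF k S g)"
  unfolding is_kRDF_def
proof (intro conjI ballI allI impI)
  have SV: "S \<subseteq> V" and gV: "g ` S \<subseteq> V"
    using dom g by (auto simp: dominating_set_def companion_map_def)
  fix v
  show "v \<in> V \<Longrightarrow> companion_RDF k S g v \<subseteq> {1..k}"
    using \<open>k \<ge> 1\<close> by (auto simp: companion_RDF_def)
  show "v \<notin> V \<Longrightarrow> companion_RDF k S g v = {}"
    using SV gV by (auto simp: companion_RDF_def)
  assume "v \<in> V" and empty: "companion_RDF k S g v = {}"
  then have "v \<notin> S" using \<open>k \<ge> 1\<close> by (auto simp: companion_RDF_def)
  obtain s where "s \<in> S" and "v \<in> closed_out_nbhd A s"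
    using dom \<open>v \<in> V\<close> by (auto simp: dominating_set_def closed_out_nbhd_set_def)
  with \<open>v \<notin> S\<close> have "s \<in> in_nbrs A v"
    by (auto simp: closed_out_nbhd_def out_nbrs_def in_nbrs_def)
  with \<open>s \<in> S\<close> show "(\<Union>u\<in>in_nbrs A v. companion_RDF k S g u) = {1..k}"
    using \<open>k \<ge> 1\<close> by (auto simp: companion_RDF_def)
qed

lemma companion_RDF_is_TkRDF:
  assumes "k \<ge> 1" and dom: "dominating_set V A S" and g: "companion_map V A S g"
  shows "is_TkRDF V A k (companion_RDF k S g)"
proof -
  let ?T = "{v\<in>V. companion_RDF k S g v \<noteq> {}}"
  have T: "?T = S \<union> g ` S"
    using dom g \<open>k \<ge> 1\<close> by (auto simp: companion_RDF_def dominating_set_def companion_map_def)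
  have "\<not> isolated_in ?T (induced_arcs A ?T) w" if "w \<in> ?T" for w
  proof -
    obtain s where "s \<in> S \<union> g ` S" and "adjacent A w s"
      using \<open>w \<in> ?T\<close> g unfolding T companion_map_def adjacent_def by blast
    with \<open>w \<in> ?T\<close> show ?thesis
      unfolding T by (auto simp: adjacent_def isolated_in_def in_nbrs_def out_nbrs_def induced_arcs_def)
  qed
  then show ?thesis
    using companion_RDF_is_kRDF[OF assms] by (simp add: is_TkRDF_def no_isolated_def)
qed

lemma weight_companion_RDF:
  assumes "finite V" and "S \<subseteq> V" and "g ` S \<subseteq> V"
  shows "weight V (companion_RDF k S g) = k * card S + card (g ` S - S)"
proof -
  have "weight V (companion_RDF k S g)
      = (\<Sum>v\<in>V. if v \<in> S then k else 0) + (\<Sum>v\<in>V. if v \<in> g ` S - S then 1 else 0)"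
    unfolding weight_def sum.distrib[symmetric] by (rule sum.cong) (auto simp: companion_RDF_def)
  also have "\<dots> = k * card S + card (g ` S - S)"
  proof -
    have "V \<inter> {v \<in> g ` S. v \<notin> S} = g ` S - S" using assms(3) by auto
    then show ?thesis using assms(1,2) by (simp add: sum.If_cases Int_absorb1)
  qed
  finally show ?thesis .
qed

lemma gamma_trk_le_companion:
  assumes "digraph V A" and "k \<ge> 1" and dom: "dominating_set V A S"
    and g: "companion_map V A S g"
  shows "gamma_trk V A k \<le> k * card S + card (g ` S - S)"
proof -
  have "finite V" and "S \<subseteq> V" and "g ` S \<subseteq> V"
    using assms by (auto simp: digraph_def dominating_set_def companion_map_def)
  then show ?thesis
    using gamma_trk_le_weight[OF companion_RDF_is_TkRDF[OF \<open>k \<ge> 1\<close> dom g]]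
    by (simp add: weight_companion_RDF)
qed

lemma gamma_set_exists:
  assumes "digraph V A"
  obtains S where "gamma_set V A S"
proof -
  have "dominating_set V A V"
    using assms
    by (auto simp: digraph_def dominating_set_def closed_out_nbhd_set_def closed_out_nbhd_def out_nbrs_def)
  then have "\<exists>S. dominating_set V A S \<and> card S = domination_number V A"
    unfolding domination_number_def
    by (intro LeastI_ex[where P = "\<lambda>n. \<exists>S. dominating_set V A S \<and> card S = n"]) blast
  then show ?thesis using that by (auto simp: gamma_set_def)
qed

lemma companion_map_exists:
  assumes "digraph V A" and "no_isolated V A"
  obtains g where "companion_map V A V g"
proof -
  have "\<exists>w. w \<in> V \<and> adjacent A s w" if "s \<in> V" for s
  proof -
    obtain w where "(s, w) \<in> A \<or> (w, s) \<in> A"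
      using assms(2) \<open>s \<in> V\<close> by (auto simp: no_isolated_def isolated_in_def in_nbrs_def out_nbrs_def)
    then show ?thesis using assms(1) by (auto simp: digraph_def adjacent_def)
  qed
  then show ?thesis using that unfolding companion_map_def by metis
qed

lemma card_companions_outside_le:
  assumes "finite S"
  shows "card (g ` S - S) \<le> card S"
  using assms by (meson Diff_subset card_image_le card_mono finite_imageI order_trans)

lemma card_companions_outside_less:
  assumes "finite S" and "b \<in> S" and "g b \<in> S \<or> g b \<in> g ` (S - {b})"
  shows "card (g ` S - S) < card S"
proof -
  have "g ` S - S \<subseteq> g ` (S - {b})" using assms(3) by auto
  then have "card (g ` S - S) \<le> card (S - {b})"
    using \<open>finite S\<close> by (meson card_image_le card_mono finite_Diff finite_imageI order_trans)
  also have "\<dots> < card S" using assms(1,2) by (rule card_Diff1_less)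
  finally show ?thesis .
qed

lemma non_packing_saves_companion:
  assumes "finite S" and "S \<subseteq> V" and "A \<subseteq> V \<times> V" and g0: "companion_map V A S g0"
    and "\<not> packing A S"
  obtains g where "companion_map V A S g" and "card (g ` S - S) < card S"
proof -
  obtain u v x where "u \<in> S" "v \<in> S" "u \<noteq> v"
    and x: "x \<in> closed_out_nbhd A u" "x \<in> closed_out_nbhd A v"
    using \<open>\<not> packing A S\<close> unfolding packing_def by blast
  show ?thesis
  proof (cases "x = u \<or> x = v")
    case True
    then obtain a b where "a \<in> S" "b \<in> S" "(b, a) \<in> A"
      using x \<open>u \<in> S\<close> \<open>v \<in> S\<close> \<open>u \<noteq> v\<close> by (auto simp: closed_out_nbhd_def out_nbrs_def)
    let ?g = "g0(b := a)"
    have "companion_map V A S ?g"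
      using g0 \<open>S \<subseteq> V\<close> \<open>a \<in> S\<close> \<open>(b, a) \<in> A\<close> by (auto simp: companion_map_def adjacent_def)
    moreover have "card (?g ` S - S) < card S"
      using card_companions_outside_less[OF \<open>finite S\<close> \<open>b \<in> S\<close>, of ?g] \<open>a \<in> S\<close> by simp
    ultimately show ?thesis by (rule that)
  next
    case False
    then have "(u, x) \<in> A" "(v, x) \<in> A" using x by (auto simp: closed_out_nbhd_def out_nbrs_def)
    let ?g = "g0(u := x, v := x)"
    have "companion_map V A S ?g"
      using g0 \<open>(u, x) \<in> A\<close> \<open>(v, x) \<in> A\<close> \<open>A \<subseteq> V \<times> V\<close>
      by (auto simp: companion_map_def adjacent_def)
    moreover have "?g u \<in> ?g ` (S - {u})"
      using \<open>v \<in> S\<close> \<open>u \<noteq> v\<close> by (simp add: image_iff)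
    then have "card (?g ` S - S) < card S"
      using card_companions_outside_less[OF \<open>finite S\<close> \<open>u \<in> S\<close>, of ?g] by blast
    ultimately show ?thesis by (rule that)
  qed
qed

theorem theorem2p1:
  fixes V :: "'a set" and A :: "('a \<times> 'a) set" and k :: nat
  assumes "digraph V A" and "k \<ge> 1" and "no_isolated V A"
  shows "gamma_trk V A k \<le> (k + 1) * domination_number V A \<and>
         (gamma_trk V A k = (k + 1) * domination_number V A \<longrightarrow>
           (\<forall>S. gamma_set V A S \<longrightarrow> packing A S))"
proof -
  have "finite V" and "A \<subseteq> V \<times> V" using assms(1) by (auto simp: digraph_def)
  obtain g0 where g0: "companion_map V A V g0"
    using companion_map_exists[OF assms(1,3)] .
  have gamma_set_facts: "dominating_set V A S \<and> S \<subseteq> V \<and> finite S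
      \<and> companion_map V A S g0 \<and> card S = domination_number V A" if "gamma_set V A S" for S
    using that g0 \<open>finite V\<close> finite_subset
    by (auto simp: gamma_set_def dominating_set_def companion_map_def)
  obtain S0 where "gamma_set V A S0" using gamma_set_exists[OF assms(1)] .
  then have bound: "gamma_trk V A k \<le> (k + 1) * domination_number V A"
    using gamma_trk_le_companion[OF assms(1,2), of S0 g0] card_companions_outside_le[of S0 g0]
      gamma_set_facts by fastforce
  have "packing A S"
    if eq: "gamma_trk V A k = (k + 1) * domination_number V A" and "gamma_set V A S" for S
  proof (rule ccontr)
    assume "\<not> packing A S"
    with gamma_set_facts[OF \<open>gamma_set V A S\<close>] \<open>A \<subseteq> V \<times> V\<close>
    obtain g where "companion_map V A S g" and "card (g ` S - S) < card S"
      by (metis non_packing_saves_companion)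
    then have "gamma_trk V A k < (k + 1) * card S"
      using gamma_trk_le_companion[OF assms(1,2)] gamma_set_facts[OF \<open>gamma_set V A S\<close>] by fastforce
    then show False using eq gamma_set_facts[OF \<open>gamma_set V A S\<close>] by simp
  qed
  with bound show ?thesis by blast
qed

end
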